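(* Let $n,N\ge 1$, let $J\in\Gamma_0(\mathbb{R}^n)$, and let $H_1,\dots,H_N\in\Gamma_0(\mathbb{R}^n)$ with $\mathrm{dom}\, H_j=\mathbb{R}^n$ for every $j$. Define $S_H:\mathbb{R}^n\times\mathbb{R}^N\to\mathbb{R}\cup\{+\infty\}$ by $$S_H(x,t_1,\dots,t_N)=\sup_{p\in\mathbb{R}^n}\Big(\langle p,x\rangle-J^*(p)-\sum_{j=1}^N t_jH_j(p)\Big)$$ if $t_1,\dots,t_N\ge 0$, and $S_H(x,t_1,\dots,t_N)=+\infty$ otherwise. Then $S_H\in\Gamma_0(\mathbb{R}^{n+N})$ and its Legendre transform is $$S_H^*(p,E_1^-,\dots,E_N^-)=J^*(p)+\sum_{j=1}^N I\{E_j^-+H_j(p)\le 0\}\qquad\text{for all }p\in\mathbb{R}^n,\ (E_1^-,\dots,E_N^-)\in\mathbb{R}^N.$$ Moreover, if in addition hypotheses (H1) and (H2) hold, then $S_H(x,t_1,\dots,t_N)$ is finite for every $x\in\mathbb{R}^n$ and every $t_1,\dots,t_N\ge 0$ that are not all zero.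
   Context: $\Gamma_0(\mathbb{R}^m)$ denotes the set of proper, convex, lower semicontinuous functions $\mathbb{R}^m\to\mathbb{R}\cup\{+\infty\}$. For $f\in\Gamma_0(\mathbb{R}^m)$, $f^*(p)=\sup_x \langle p,x\rangle-f(x)$ is its Legendre transform. $I\{\cdot\}$ denotes the indicator function of the set described by the constraint (value $0$ on the set, $+\infty$ off it). A function $g$ is 1-coercive if $g(x)/\|x\|\to+\infty$ as $\|x\|\to\infty$. Hypothesis (H1): each $H_j:\mathbb{R}^n\to\mathbb{R}$ ($j=1,\dots,N$) is finite-valued, convex and 1-coercive, and at least one $H_j$ is strictly convex. Hypothesis (H2): $J\in\Gamma_0(\mathbb{R}^n)$. *)

theory Defs
  imports "HOL-Analysis.Analysis" "HOL-Library.Extended_Real"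
begin

text \<open>Functions with values in R \<union> {+\<infinity>} are modelled as ereal-valued functions.\<close>

definition epigraph_e :: "('a \<Rightarrow> ereal) \<Rightarrow> ('a \<times> real) set" where
  "epigraph_e f = {(x, r). f x \<le> ereal r}"

definition proper_e :: "('a \<Rightarrow> ereal) \<Rightarrow> bool" where
  "proper_e f \<longleftrightarrow> (\<forall>x. f x \<noteq> -\<infinity>) \<and> (\<exists>x. f x \<noteq> \<infinity>)"

definition Gamma0 :: "('a::euclidean_space \<Rightarrow> ereal) \<Rightarrow> bool" where
  "Gamma0 f \<longleftrightarrow> proper_e f \<and> convex (epigraph_e f) \<and> closed (epigraph_e f)"

definition legendre :: "('a::real_inner \<Rightarrow> ereal) \<Rightarrow> 'a \<Rightarrow> ereal" where
  "legendre f p = (SUP x. ereal (inner p x) - f x)"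

definition indicator_e :: "bool \<Rightarrow> ereal" where
  "indicator_e P = (if P then 0 else \<infinity>)"

definition strictly_convex_on :: "'a::real_vector set \<Rightarrow> ('a \<Rightarrow> real) \<Rightarrow> bool" where
  "strictly_convex_on S f \<longleftrightarrow> (\<forall>x\<in>S. \<forall>y\<in>S. x \<noteq> y \<longrightarrow> (\<forall>u::real. 0 < u \<and> u < 1 \<longrightarrow>
      f ((1 - u) *\<^sub>R x + u *\<^sub>R y) < (1 - u) * f x + u * f y))"

definition one_coercive :: "('a::real_normed_vector \<Rightarrow> real) \<Rightarrow> bool" where
  "one_coercive g \<longleftrightarrow> filterlim (\<lambda>x. g x / norm x) at_top at_infinity"

definition S_H :: "('a::euclidean_space \<Rightarrow> ereal) \<Rightarrow> ('N::finite \<Rightarrow> 'a \<Rightarrow> real)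
    \<Rightarrow> 'a \<times> (real ^ 'N) \<Rightarrow> ereal" where
  "S_H J H = (\<lambda>(x, t). if (\<forall>j. t $ j \<ge> 0)
      then (SUP p. ereal (inner p x) - legendre J p - ereal (\<Sum>j\<in>UNIV. t $ j * H j p))
      else \<infinity>)"

end

theory Submission
  imports Defs
begin

text \<open>
  The epigraph of S_H is the intersection of the closed cone t \<ge> 0 with the closed half-spaces
  cut out by the affine functions (x, t) \<mapsto> \<langle>p, x\<rangle> - J*(p) - \<Sum> t_j H_j(p), so S_H is
  convex and lower semicontinuous; it is proper because S_H(x, 0) \<le> J(x) and because J* is
  finite somewhere. Choosing t = 0 shows S_H* \<ge> J*. If E_j + H_j(p) \<le> 0 for all j, then every
  affine function above lies below \<langle>(p, E), (x, t)\<rangle> - J*(p), so S_H* \<le> J*. If E_k + H_k(p) > 0,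
  an affine minorant of H_k that still exceeds -E_k at p yields a ray (x + s v, s e_k) along which
  \<langle>(p, E), \<cdot>\<rangle> - S_H grows linearly in s, so S_H*(p, E) = +\<infinity>. Finally, for t_k > 0 the
  1-coercivity of H_k dominates every linear term, which bounds S_H(x, t) from above.
\<close>

lemma closed_convex_epigraph_affine_minorant:
  fixes f :: "'a::euclidean_space \<Rightarrow> ereal"
  assumes cv: "convex (epigraph_e f)" and cl: "closed (epigraph_e f)"
    and fz: "f z = ereal m" and mc: "c < m"
  shows "\<exists>w d. (\<forall>x. ereal (inner w x + d) \<le> f x) \<and> inner w z + d > c"
proof -
  have "(z, c) \<notin> epigraph_e f" using fz mc by (simp add: epigraph_e_def)
  from separating_hyperplane_closed_point[OF cv cl this]
  obtain a b where ab: "inner a (z, c) < b" "\<forall>y\<in>epigraph_e f. inner a y > b" by blast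
  obtain v \<beta> where a: "a = (v, \<beta>)" by (cases a)
  have zm: "(z, m) \<in> epigraph_e f" using fz by (simp add: epigraph_e_def)
  have below: "inner v z + \<beta> * c < b" using ab(1) a by simp
  have above: "inner v z + \<beta> * m > b" using ab(2) zm a by auto
  have "\<beta> > 0"
    using below above mc by (smt (verit) mult_le_cancel_left)
  have low: "ereal (inner (- v /\<^sub>R \<beta>) x + b / \<beta>) \<le> f x" for x
  proof (cases "f x")
    case (real r)
    have "(x, r) \<in> epigraph_e f" using real by (simp add: epigraph_e_def)
    hence "inner v x + \<beta> * r > b" using ab(2) a by auto
    hence "(b - inner v x) / \<beta> < r" using \<open>\<beta> > 0\<close> by (simp add: divide_less_eq algebra_simps)
    thus ?thesis
      using real by (simp add: diff_divide_distrib divide_inverse right_diff_distrib mult.commute)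
  next
    case MInf
    have "(x, (- \<bar>b\<bar> - \<bar>inner v x\<bar>) / \<beta>) \<in> epigraph_e f" using MInf by (simp add: epigraph_e_def)
    hence "inner v x + \<beta> * ((- \<bar>b\<bar> - \<bar>inner v x\<bar>) / \<beta>) > b" using ab(2) a by auto
    hence False using \<open>\<beta> > 0\<close> by simp
    thus ?thesis ..
  qed simp
  have "(b - inner v z) / \<beta> > c" using below \<open>\<beta> > 0\<close> by (simp add: less_divide_eq algebra_simps)
  hence "inner (- v /\<^sub>R \<beta>) z + b / \<beta> > c"
    by (simp add: diff_divide_distrib divide_inverse right_diff_distrib mult.commute)
  with low show ?thesis by blast
qed

lemma Gamma0_real_affine_minorant:
  fixes h :: "'a::euclidean_space \<Rightarrow> real"
  assumes "Gamma0 (\<lambda>p. ereal (h p))" and "c < h z"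
  shows "\<exists>v d. (\<forall>q. inner v q + d \<le> h q) \<and> inner v z + d > c"
  using assms closed_convex_epigraph_affine_minorant[of "\<lambda>p. ereal (h p)" z "h z" c]
  by (auto simp: Gamma0_def)

lemma fenchel_young_legendre: "ereal (inner p x) - f x \<le> legendre f p"
  unfolding legendre_def by (rule SUP_upper) auto

lemma ereal_diff_le_swap: "ereal a - y \<le> z \<Longrightarrow> ereal a - z \<le> (y::ereal)"
  by (cases y; cases z) auto

lemma Gamma0_finite_somewhere: "Gamma0 f \<Longrightarrow> \<exists>x a. f x = ereal a"
  unfolding Gamma0_def proper_e_def by (metis ereal_cases)

lemma legendre_not_MInf:
  assumes "f x = ereal a"
  shows "legendre f p \<noteq> -\<infinity>"
  using fenchel_young_legendre[of p x f] assms by auto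

lemma Gamma0_legendre_finite_somewhere:
  fixes f :: "'a::euclidean_space \<Rightarrow> ereal"
  assumes "Gamma0 f"
  shows "\<exists>p c. legendre f p = ereal c"
proof -
  obtain x a where fx: "f x = ereal a"
    using Gamma0_finite_somewhere[OF assms] by blast
  obtain w d where wd: "\<forall>x. ereal (inner w x + d) \<le> f x"
    using assms closed_convex_epigraph_affine_minorant[of f x a "a - 1"] fx
    by (auto simp: Gamma0_def)
  have "legendre f w \<le> ereal (- d)"
    unfolding legendre_def
  proof (rule SUP_least)
    fix x
    show "ereal (inner w x) - f x \<le> ereal (- d)"
      using wd[rule_format, of x] by (cases "f x") auto
  qed
  then show ?thesis
    using legendre_not_MInf[of f x a w, OF fx] by (cases "legendre f w") auto
qed

lemma sum_indicator_e:
  "finite A \<Longrightarrow> (\<Sum>j\<in>A. indicator_e (P j)) = indicator_e (\<forall>j\<in>A. P j)"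
  by (induction A rule: finite_induct) (auto simp: indicator_e_def)

lemma S_H_nonneg:
  "\<forall>j. t $ j \<ge> 0 \<Longrightarrow>
    S_H J H (x, t) = (SUP p. ereal (inner p x) - legendre J p - ereal (\<Sum>j\<in>UNIV. t $ j * H j p))"
  by (simp add: S_H_def)

lemma S_H_neg: "\<not> (\<forall>j. t $ j \<ge> 0) \<Longrightarrow> S_H J H (x, t) = \<infinity>"
  by (auto simp: S_H_def)

lemma S_H_ge:
  "\<forall>j. t $ j \<ge> 0 \<Longrightarrow>
    ereal (inner q x) - legendre J q - ereal (\<Sum>j\<in>UNIV. t $ j * H j q) \<le> S_H J H (x, t)"
  by (simp add: S_H_nonneg) (rule SUP_upper, simp)

lemma S_H_le:
  "\<forall>j. t $ j \<ge> 0 \<Longrightarrow>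
    (\<And>q. ereal (inner q x) - legendre J q - ereal (\<Sum>j\<in>UNIV. t $ j * H j q) \<le> B) \<Longrightarrow>
    S_H J H (x, t) \<le> B"
  by (simp add: S_H_nonneg) (rule SUP_least)

lemma S_H_zero_le: "S_H J H (x, 0) \<le> J x"
proof (rule S_H_le)
  fix q
  have "ereal (inner q x) - legendre J q \<le> J x"
    by (rule ereal_diff_le_swap[OF fenchel_young_legendre])
  thus "ereal (inner q x) - legendre J q - ereal (\<Sum>j\<in>UNIV. (0::real^'b) $ j * H j q) \<le> J x"
    by simp
qed simp

lemma S_H_not_MInf:
  assumes "legendre J p = ereal c"
  shows "S_H J H z \<noteq> -\<infinity>"
proof -
  obtain x t where z: "z = (x, t)" by (cases z)
  show ?thesis
  proof (cases "\<forall>j. t $ j \<ge> 0")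
    case True
    from S_H_ge[OF True, of p x J H] assms show ?thesis by (auto simp: z)
  qed (simp add: z S_H_neg)
qed

lemma convex_closed_epigraph_S_H:
  fixes J :: "'a::euclidean_space \<Rightarrow> ereal" and H :: "'b::finite \<Rightarrow> 'a \<Rightarrow> real"
  assumes "\<And>p. legendre J p \<noteq> -\<infinity>"
  shows "convex (epigraph_e (S_H J H)) \<and> closed (epigraph_e (S_H J H))"
proof -
  define T :: "(('a \<times> (real^'b)) \<times> real) set" where "T = {z. \<forall>j. 0 \<le> snd (fst z) $ j}"
  define G :: "'a \<Rightarrow> (('a \<times> (real^'b)) \<times> real) set" where "G p = {z. ereal (inner p (fst (fst z)))
      - legendre J p - ereal (\<Sum>j\<in>UNIV. snd (fst z) $ j * H j p) \<le> ereal (snd z)}" for p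
  have epi: "epigraph_e (S_H J H) = T \<inter> (\<Inter>p. G p)"
    unfolding epigraph_e_def T_def G_def by (auto simp: S_H_def SUP_le_iff split: if_splits)
  have "convex T" "closed T"
    unfolding T_def by (auto simp: convex_def intro!: closed_Collect_all closed_Collect_le continuous_intros)
  moreover have "convex (G p) \<and> closed (G p)" for p
  proof (cases "legendre J p")
    case (real c)
    have "G p = {z. inner ((p, \<chi> j. - H j p), -1) z \<le> c}"
      unfolding G_def real by (auto simp: inner_vec_def sum_negf algebra_simps)
    thus ?thesis by (simp add: convex_halfspace_le closed_halfspace_le)
  next
    case PInf
    hence "G p = UNIV" unfolding G_def by auto
    thus ?thesis by simp
  qed (use assms in simp)
  ultimately show ?thesis
    unfolding epi by (intro conjI convex_Int closed_Int convex_Inter closed_Inter) auto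
qed

lemma Gamma0_S_H:
  assumes "Gamma0 J"
  shows "Gamma0 (S_H J H)"
proof -
  obtain x a where Jx: "J x = ereal a"
    using Gamma0_finite_somewhere[OF assms] by blast
  obtain p c where "legendre J p = ereal c"
    using Gamma0_legendre_finite_somewhere[OF assms] by blast
  hence "S_H J H z \<noteq> -\<infinity>" for z by (rule S_H_not_MInf)
  moreover have "S_H J H (x, 0) \<noteq> \<infinity>"
    using S_H_zero_le[of J H x] Jx by auto
  ultimately have "proper_e (S_H J H)"
    unfolding proper_e_def by blast
  with convex_closed_epigraph_S_H[OF legendre_not_MInf[of J x a, OF Jx]] show ?thesis
    by (simp add: Gamma0_def)
qed

lemma legendre_le_legendre_S_H: "legendre J p \<le> legendre (S_H J H) (p, E)"
  unfolding legendre_def[of J]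
proof (rule SUP_least)
  fix x
  have "ereal (inner p x) - J x \<le> ereal (inner p x) - S_H J H (x, 0)"
    by (rule ereal_minus_mono) (auto simp: S_H_zero_le)
  also have "\<dots> = ereal (inner (p, E) (x, 0)) - S_H J H (x, 0)" by simp
  also have "\<dots> \<le> legendre (S_H J H) (p, E)" by (rule fenchel_young_legendre)
  finally show "ereal (inner p x) - J x \<le> legendre (S_H J H) (p, E)" .
qed

lemma legendre_S_H_le_if_feasible:
  fixes J :: "'a::euclidean_space \<Rightarrow> ereal" and H :: "'b::finite \<Rightarrow> 'a \<Rightarrow> real"
  assumes feasible: "\<forall>j. E $ j + H j p \<le> 0" and J_not_MInf: "legendre J p \<noteq> -\<infinity>"
  shows "legendre (S_H J H) (p, E) \<le> legendre J p"
  unfolding legendre_def[of "S_H J H"]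
proof (rule SUP_least)
  fix z :: "'a \<times> (real^'b)"
  obtain x t where z: "z = (x, t)" by (cases z)
  show "ereal (inner (p, E) z) - S_H J H z \<le> legendre J p"
  proof (cases "\<forall>j. t $ j \<ge> 0")
    case tn: True
    show ?thesis
    proof (cases "legendre J p")
      case (real c)
      have "(\<Sum>j\<in>UNIV. t $ j * H j p) \<le> (\<Sum>j\<in>UNIV. - (E $ j * t $ j))"
      proof (rule sum_mono)
        fix j
        have "t $ j * (H j p + E $ j) \<le> 0"
          using tn feasible[rule_format, of j] by (simp add: mult_nonneg_nonpos)
        thus "t $ j * H j p \<le> - (E $ j * t $ j)" by (simp add: algebra_simps)
      qed
      hence le: "inner E t \<le> - (\<Sum>j\<in>UNIV. t $ j * H j p)"
        by (simp add: inner_vec_def sum_negf)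
      have "ereal (inner (p, E) z) - S_H J H z \<le>
            ereal (inner (p, E) z) - (ereal (inner p x) - legendre J p - ereal (\<Sum>j\<in>UNIV. t $ j * H j p))"
        unfolding z by (rule ereal_minus_mono) (auto intro: S_H_ge[OF tn])
      also have "\<dots> \<le> legendre J p" using le unfolding z real by simp
      finally show ?thesis .
    qed (use J_not_MInf in auto)
  qed (simp add: z S_H_neg)
qed

lemma S_H_ray_le:
  assumes Jx: "J x = ereal a" and minorant: "\<forall>q. inner v q + d \<le> H k q" and "s \<ge> 0"
  shows "S_H J H (x + s *\<^sub>R v, \<chi> j. if j = k then s else 0) \<le> ereal (a - s * d)"
proof (rule S_H_le)
  show "\<forall>j. (\<chi> j. if j = k then s else 0) $ j \<ge> 0" using \<open>s \<ge> 0\<close> by simp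
next
  fix q
  have sum_eq: "(\<Sum>j\<in>UNIV. (if j = k then s else 0) * H j q) = s * H k q"
    by (simp add: if_distrib[of "\<lambda>a. a * _"] cong: if_cong)
  show "ereal (inner q (x + s *\<^sub>R v)) - legendre J q
      - ereal (\<Sum>j\<in>UNIV. (\<chi> j. if j = k then s else 0) $ j * H j q) \<le> ereal (a - s * d)"
  proof (cases "legendre J q")
    case (real c)
    have "inner q x - a \<le> c"
      using fenchel_young_legendre[of q x J] real Jx by simp
    moreover have "s * (inner v q + d) \<le> s * H k q"
      using minorant \<open>s \<ge> 0\<close> by (simp add: mult_left_mono)
    ultimately have "inner q (x + s *\<^sub>R v) - c - s * H k q \<le> a - s * d"
      by (simp add: inner_add_right inner_commute algebra_simps)
    thus ?thesis using real by (simp add: sum_eq)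
  qed (use legendre_not_MInf[of J x a, OF Jx] in auto)
qed

lemma legendre_S_H_eq_PInf:
  assumes Jx: "J x = ereal a" and H: "Gamma0 (\<lambda>p. ereal (H k p))" and k: "E $ k + H k p > 0"
  shows "legendre (S_H J H) (p, E) = \<infinity>"
proof (rule ereal_top)
  obtain v d where minorant: "\<forall>q. inner v q + d \<le> H k q" and "inner v p + d > - E $ k"
    using Gamma0_real_affine_minorant[OF H, of "- E $ k" p] k by auto
  define \<delta> where "\<delta> = inner v p + d + E $ k"
  have "\<delta> > 0" using \<open>inner v p + d > - E $ k\<close> by (simp add: \<delta>_def)
  have along_ray: "ereal (inner p x - a + s * \<delta>) \<le> legendre (S_H J H) (p, E)" if "s \<ge> 0" for s
  proof -
    define z where "z = (x + s *\<^sub>R v, \<chi> j. if j = k then s else 0)"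
    have "inner E (\<chi> j. if j = k then s else 0) = E $ k * s"
      by (simp add: inner_vec_def if_distrib[of "\<lambda>a. _ * a"] cong: if_cong)
    hence "ereal (inner p x - a + s * \<delta>) = ereal (inner (p, E) z) - ereal (a - s * d)"
      by (simp add: z_def \<delta>_def inner_add_right inner_commute algebra_simps)
    also have "\<dots> \<le> ereal (inner (p, E) z) - S_H J H z"
      unfolding z_def
      by (rule ereal_minus_mono) (auto intro: S_H_ray_le[of J x a v d H k s, OF Jx minorant that])
    also have "\<dots> \<le> legendre (S_H J H) (p, E)" by (rule fenchel_young_legendre)
    finally show ?thesis .
  qed
  fix B
  define s where "s = max 0 ((B - inner p x + a) / \<delta>)"
  have "(B - inner p x + a) / \<delta> \<le> s" by (simp add: s_def)
  hence "B - inner p x + a \<le> s * \<delta>" using \<open>\<delta> > 0\<close> by (simp add: divide_le_eq)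
  hence "ereal B \<le> ereal (inner p x - a + s * \<delta>)" by simp
  also have "\<dots> \<le> legendre (S_H J H) (p, E)" by (rule along_ray) (simp add: s_def)
  finally show "ereal B \<le> legendre (S_H J H) (p, E)" .
qed

lemma legendre_S_H:
  assumes J: "Gamma0 J" and H: "\<And>j. Gamma0 (\<lambda>p. ereal (H j p))"
  shows "legendre (S_H J H) (p, E) =
    legendre J p + (\<Sum>j\<in>UNIV. indicator_e (E $ j + H j p \<le> 0))"
proof -
  obtain x a where Jx: "J x = ereal a"
    using Gamma0_finite_somewhere[OF J] by blast
  note J_not_MInf = legendre_not_MInf[of J x a p, OF Jx]
  show ?thesis
  proof (cases "\<forall>j. E $ j + H j p \<le> 0")
    case True
    have "legendre (S_H J H) (p, E) = legendre J p"
      by (rule antisym[OF legendre_S_H_le_if_feasible[of E H p J, OF True J_not_MInf]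
            legendre_le_legendre_S_H])
    with True show ?thesis unfolding sum_indicator_e[OF finite] by (simp add: indicator_e_def)
  next
    case False
    then obtain k where "E $ k + H k p > 0" by (auto simp: not_le)
    with legendre_S_H_eq_PInf[of J x a H k E p, OF Jx H] False J_not_MInf show ?thesis
      unfolding sum_indicator_e[OF finite] by (auto simp: indicator_e_def)
  qed
qed

lemma one_coercive_cmult:
  assumes "one_coercive g" and "c > 0"
  shows "one_coercive (\<lambda>x. c * g x)"
  using filterlim_tendsto_pos_mult_at_top[OF tendsto_const assms(2) assms(1)[unfolded one_coercive_def]]
  unfolding one_coercive_def by simp

lemma one_coercive_inner_minus_bounded:
  fixes g :: "'a::real_inner \<Rightarrow> real"
  assumes coercive: "one_coercive g" and minorant: "\<forall>q. inner v q + d \<le> g q"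
  shows "\<exists>B. \<forall>q. inner q y - g q \<le> B"
proof -
  have "eventually (\<lambda>q. g q / norm q \<ge> norm y) at_infinity"
    using coercive by (simp add: one_coercive_def filterlim_at_top)
  then obtain R where R: "\<And>q. norm q \<ge> R \<Longrightarrow> g q / norm q \<ge> norm y"
    by (auto simp: eventually_at_infinity)
  define R' where "R' = max R 1"
  have "inner q y - g q \<le> R' * (norm y + norm v) + \<bar>d\<bar>" for q
  proof (cases "norm q \<ge> R'")
    case True
    hence "norm q > 0" "norm y \<le> g q / norm q" using R by (auto simp: R'_def)
    hence "inner q y \<le> g q"
      using norm_cauchy_schwarz[of q y] by (simp add: pos_le_divide_eq mult.commute)
    moreover have "0 \<le> R' * (norm y + norm v)" by (simp add: R'_def)
    ultimately show ?thesis by linarith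
  next
    case False
    have "inner q y - g q \<le> norm q * norm y + norm v * norm q + \<bar>d\<bar>"
      using norm_cauchy_schwarz[of q y] Cauchy_Schwarz_ineq2[of v q] minorant[rule_format, of q]
      by linarith
    also have "\<dots> = norm q * (norm y + norm v) + \<bar>d\<bar>" by (simp add: algebra_simps)
    also have "\<dots> \<le> R' * (norm y + norm v) + \<bar>d\<bar>"
      using False by (simp add: mult_right_mono)
    finally show ?thesis .
  qed
  thus ?thesis by blast
qed

lemma S_H_not_PInf:
  assumes J: "Gamma0 J" and H: "\<And>j. Gamma0 (\<lambda>p. ereal (H j p))"
    and coercive: "one_coercive (H k)"
    and t: "\<forall>j. t $ j \<ge> 0" "t $ k > 0"
  shows "S_H J H (x, t) \<noteq> \<infinity>"
proof -
  obtain x0 a where Jx0: "J x0 = ereal a"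
    using Gamma0_finite_somewhere[OF J] by blast
  have "\<exists>v d. \<forall>q. inner v q + d \<le> H j q" for j
    using Gamma0_real_affine_minorant[of "H j" "H j 0 - 1" 0] H by auto
  then obtain V D where minorants: "\<And>j q. inner (V j) q + D j \<le> H j q" by metis
  define w where "w = (\<Sum>j\<in>-{k}. t $ j *\<^sub>R V j)"
  define e where "e = (\<Sum>j\<in>-{k}. t $ j * D j)"
  have sum_ge: "t $ k * H k q + inner w q + e \<le> (\<Sum>j\<in>UNIV. t $ j * H j q)" for q
  proof -
    have "inner w q + e = (\<Sum>j\<in>-{k}. t $ j * (inner (V j) q + D j))"
      by (simp add: w_def e_def inner_sum_left sum.distrib algebra_simps)
    also have "\<dots> \<le> (\<Sum>j\<in>-{k}. t $ j * H j q)"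
      using t(1) minorants by (intro sum_mono mult_left_mono) auto
    finally show ?thesis
      by (simp add: sum.remove[of UNIV k] Compl_eq_Diff_UNIV)
  qed
  have "\<forall>q. inner (t $ k *\<^sub>R V k) q + t $ k * D k \<le> t $ k * H k q"
    using minorants t(1) by (simp add: distrib_left[symmetric] mult_left_mono)
  then obtain B where B: "\<And>q. inner q (x - x0 - w) - t $ k * H k q \<le> B"
    using one_coercive_inner_minus_bounded[OF one_coercive_cmult[OF coercive t(2)]] by blast
  have "S_H J H (x, t) \<le> ereal (B + a - e)"
  proof (rule S_H_le[OF t(1)])
    fix q
    show "ereal (inner q x) - legendre J q - ereal (\<Sum>j\<in>UNIV. t $ j * H j q) \<le> ereal (B + a - e)"
    proof (cases "legendre J q")
      case (real c)
      have "inner q x0 - a \<le> c"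
        using fenchel_young_legendre[of q x0 J] real Jx0 by simp
      moreover have "inner q x - inner q x0 - inner w q - t $ k * H k q \<le> B"
        using B[of q] by (simp add: inner_diff_right inner_commute[of w q])
      ultimately have "inner q x - c - (\<Sum>j\<in>UNIV. t $ j * H j q) \<le> B + a - e"
        using sum_ge[of q] by linarith
      thus ?thesis using real by simp
    qed (use legendre_not_MInf[of J x0 a, OF Jx0] in auto)
  qed
  thus ?thesis by auto
qed

theorem proposition3p1:
  fixes J :: "'a::euclidean_space \<Rightarrow> ereal"
    and H :: "'N::finite \<Rightarrow> 'a \<Rightarrow> real"
  assumes J: "Gamma0 J"
    and H: "\<And>j. Gamma0 (\<lambda>p. ereal (H j p))"
  shows "Gamma0 (S_H J H)
    \<and> (\<forall>p E. legendre (S_H J H) (p, E) =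
          legendre J p + (\<Sum>j\<in>UNIV. indicator_e (E $ j + H j p \<le> 0)))
    \<and> (((\<forall>j. convex_on UNIV (H j) \<and> one_coercive (H j))
          \<and> (\<exists>j. strictly_convex_on UNIV (H j)) \<and> Gamma0 J)
        \<longrightarrow> (\<forall>x t. (\<forall>j. t $ j \<ge> 0) \<and> (\<exists>j. t $ j \<noteq> 0)
              \<longrightarrow> S_H J H (x, t) \<noteq> \<infinity> \<and> S_H J H (x, t) \<noteq> -\<infinity>))"
proof -
  obtain p c where "legendre J p = ereal c"
    using Gamma0_legendre_finite_somewhere[OF J] by blast
  hence not_MInf: "S_H J H z \<noteq> -\<infinity>" for z by (rule S_H_not_MInf)
  have not_PInf: "S_H J H (x, t) \<noteq> \<infinity>"
    if "\<forall>j. one_coercive (H j)" "\<forall>j. t $ j \<ge> 0" "t $ k \<noteq> 0" for x t k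
  proof -
    have "t $ k > 0" using that(2,3) by (metis order_le_less)
    with that(1,2) show ?thesis using S_H_not_PInf[of J H k t x, OF J H] by blast
  qed
  show ?thesis
    using Gamma0_S_H[OF J] legendre_S_H[of J H, OF J H] not_MInf not_PInf by blast
qed

end
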